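(* Let $n\ge1$ and $k=3$. There exist even functions $V_1,V_2,V_3:\mathbb{R}^n\to\mathbb{R}\cup\{+\infty\}$ such that for each $m\in\{1,2,3\}$ and every $x_m\in\mathbb{R}^n$, $$V_m(x_m)=\sup_{x_i\in\mathbb{R}^n,\ i\ne m}\Bigl(\sum_{1\le i<j\le 3}\langle x_i,x_j\rangle-\sum_{i\ne m}V_i(x_i)\Bigr),$$ and $$\prod_{i=1}^3\int_{\mathbb{R}^n}e^{-V_i(x)}\,dx=0 .$$
   Context: $\langle\cdot,\cdot\rangle$ is the standard inner product on $\mathbb{R}^n$, and $e^{-\infty}=0$. *)

theory Defs
  imports "HOL-Analysis.Analysis"
begin

fun exp_neg_ereal :: "ereal \<Rightarrow> ennreal" where
  "exp_neg_ereal (ereal r) = ennreal (exp (- r))"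
| "exp_neg_ereal PInfty = 0"
| "exp_neg_ereal MInfty = top"

end

theory Submission
  imports Defs
begin

text \<open>Take V_1 to be the convex indicator of the origin and V_2 = V_3 = |x|^2/2.
For m = 1 the objective is <z, y_2 + y_3> - |y_2 - y_3|^2/2, whose supremum is 0 at z = 0
and +\<infinity> otherwise. For m = 2, 3 the indicator forces y_1 = 0, and what remains is the
Legendre transform of |x|^2/2, which is |x|^2/2 itself. Finally exp(-V_1) is the indicator
of a null set, so the product of the integrals vanishes.\<close>

definition pairwise_inner :: "(nat \<Rightarrow> 'a::real_inner) \<Rightarrow> real" where
  "pairwise_inner y = (\<Sum>i\<in>{1,2,3::nat}. \<Sum>j\<in>{1,2,3::nat}. if i < j then inner (y i) (y j) else 0)"

definition multi_conjugate :: "(nat \<Rightarrow> 'a::real_inner \<Rightarrow> ereal) \<Rightarrow> nat \<Rightarrow> 'a \<Rightarrow> ereal" where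
  "multi_conjugate V m z = (SUP y \<in> {y. y m = z}.
     ereal (pairwise_inner y) - (\<Sum>i\<in>{1,2,3} - {m}. V i (y i)))"

definition origin_indicator :: "'a::real_vector \<Rightarrow> ereal" where
  "origin_indicator x = (if x = 0 then 0 else \<infinity>)"

definition degenerate_triple :: "nat \<Rightarrow> 'a::real_normed_vector \<Rightarrow> ereal" where
  "degenerate_triple i x = (if i = 1 then origin_indicator x else ereal (norm x ^ 2 / 2))"

lemma pairwise_inner_eq:
  "pairwise_inner y = inner (y 1) (y 2) + inner (y 1) (y 3) + inner (y 2) (y 3)"
  by (simp add: pairwise_inner_def)

lemma inner_le_half_sq_norms:
  fixes x y :: "'a::real_inner"
  shows "inner x y \<le> norm x ^ 2 / 2 + norm y ^ 2 / 2"
proof -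
  have "0 \<le> norm (x - y) ^ 2" by simp
  also have "\<dots> = norm x ^ 2 - 2 * inner x y + norm y ^ 2"
    by (simp add: power2_norm_eq_inner inner_diff inner_commute)
  finally show ?thesis by simp
qed

lemma multi_conjugate_degenerate_triple_1:
  fixes z :: "'a::real_inner"
  shows "multi_conjugate degenerate_triple 1 z
    = (SUP y \<in> {y :: nat \<Rightarrow> 'a. y 1 = z}. ereal (inner z (y 2 + y 3) - norm (y 2 - y 3) ^ 2 / 2))"
  unfolding multi_conjugate_def
proof (rule SUP_cong)
  fix y :: "nat \<Rightarrow> 'a" assume "y \<in> {y. y 1 = z}"
  then have "y 1 = z" by simp
  moreover have "{1,2,3::nat} - {1} = {2,3}" by auto
  moreover have "inner (y 2) (y 3) - norm (y 2) ^ 2 / 2 - norm (y 3) ^ 2 / 2 = - (norm (y 2 - y 3) ^ 2 / 2)"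
    by (simp add: power2_norm_eq_inner inner_diff inner_commute field_simps)
  ultimately show "ereal (pairwise_inner y) - (\<Sum>i\<in>{1,2,3} - {1}. degenerate_triple i (y i))
    = ereal (inner z (y 2 + y 3) - norm (y 2 - y 3) ^ 2 / 2)"
    by (simp add: pairwise_inner_eq degenerate_triple_def inner_add_right)
qed simp

lemma multi_conjugate_degenerate_triple_1_zero:
  "multi_conjugate degenerate_triple 1 (0::'a::real_inner) = 0"
  unfolding multi_conjugate_degenerate_triple_1
proof (rule antisym)
  show "(SUP y \<in> {y :: nat \<Rightarrow> 'a. y 1 = 0}. ereal (inner 0 (y 2 + y 3) - norm (y 2 - y 3) ^ 2 / 2)) \<le> 0"
    by (rule SUP_least) simp
  show "0 \<le> (SUP y \<in> {y :: nat \<Rightarrow> 'a. y 1 = 0}. ereal (inner 0 (y 2 + y 3) - norm (y 2 - y 3) ^ 2 / 2))"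
    by (rule SUP_upper2[of "\<lambda>_. 0"]) simp_all
qed

lemma multi_conjugate_degenerate_triple_1_nonzero:
  fixes z :: "'a::real_inner"
  assumes "z \<noteq> 0"
  shows "multi_conjugate degenerate_triple 1 z = \<infinity>"
  unfolding multi_conjugate_degenerate_triple_1
proof (rule ereal_top)
  fix B :: real
  have "inner z z > 0" using assms by simp
  define t where "t = B / (2 * inner z z)"
  define y where "y = (\<lambda>i::nat. if i = 1 then z else t *\<^sub>R z)"
  have "inner z (y 2 + y 3) - norm (y 2 - y 3) ^ 2 / 2 = 2 * t * inner z z"
    by (simp add: y_def inner_add_right)
  also have "\<dots> = B"
    using \<open>inner z z > 0\<close> by (simp add: t_def)
  finally have "ereal B = ereal (inner z (y 2 + y 3) - norm (y 2 - y 3) ^ 2 / 2)" by simp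
  also have "\<dots> \<le> (SUP y \<in> {y :: nat \<Rightarrow> 'a. y 1 = z}. ereal (inner z (y 2 + y 3) - norm (y 2 - y 3) ^ 2 / 2))"
    by (rule SUP_upper) (simp add: y_def)
  finally show "ereal B \<le> \<dots>" .
qed

lemma multi_conjugate_degenerate_triple_2_3:
  fixes z :: "'a::real_inner"
  assumes mk: "{m, k} = {2, 3::nat}"
  shows "multi_conjugate degenerate_triple m z = ereal (norm z ^ 2 / 2)"
proof -
  have "m \<noteq> 1" "k \<noteq> 1" using mk by (auto simp: doubleton_eq_iff)
  have objective: "ereal (pairwise_inner y) - (\<Sum>i\<in>{1,2,3} - {m}. degenerate_triple i (y i))
    = (if y 1 = 0 then ereal (inner z (y k) - norm (y k) ^ 2 / 2) else -\<infinity>)"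
    if "y m = z" for y :: "nat \<Rightarrow> 'a"
  proof -
    have "{1,2,3} - {m} = {1, k}" and "pairwise_inner y = inner (y 1) (y m + y k) + inner (y m) (y k)"
      using mk by (auto simp: doubleton_eq_iff pairwise_inner_eq inner_add_right inner_commute)
    then show ?thesis
      using \<open>y m = z\<close> \<open>k \<noteq> 1\<close> by (simp add: degenerate_triple_def origin_indicator_def)
  qed
  have "multi_conjugate degenerate_triple m z
      = (SUP y \<in> {y. y m = z}. if y 1 = 0 then ereal (inner z (y k) - norm (y k) ^ 2 / 2) else -\<infinity>)"
    unfolding multi_conjugate_def by (rule SUP_cong[OF refl]) (rule objective, simp)
  also have "\<dots> = ereal (norm z ^ 2 / 2)"
  proof (rule antisym)
    show "(SUP y \<in> {y. y m = z}. if y 1 = 0 then ereal (inner z (y k) - norm (y k) ^ 2 / 2) else -\<infinity>)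
        \<le> ereal (norm z ^ 2 / 2)"
    proof (rule SUP_least)
      fix y :: "nat \<Rightarrow> 'a"
      show "(if y 1 = 0 then ereal (inner z (y k) - norm (y k) ^ 2 / 2) else -\<infinity>) \<le> ereal (norm z ^ 2 / 2)"
        using inner_le_half_sq_norms[of z "y k"] by simp
    qed
    let ?y = "\<lambda>i. if i = 1 then 0 else z"
    have "?y \<in> {y. y m = z}" and "?y k = z" and "inner z z = norm z ^ 2"
      using \<open>m \<noteq> 1\<close> \<open>k \<noteq> 1\<close> by (simp_all add: power2_norm_eq_inner)
    then show "ereal (norm z ^ 2 / 2)
        \<le> (SUP y \<in> {y. y m = z}. if y 1 = 0 then ereal (inner z (y k) - norm (y k) ^ 2 / 2) else -\<infinity>)"
      by (intro SUP_upper2[of ?y]) simp_all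
  qed
  finally show ?thesis .
qed

lemma multi_conjugate_degenerate_triple:
  fixes z :: "'a::real_inner"
  assumes "m \<in> {1,2,3}"
  shows "multi_conjugate degenerate_triple m z = degenerate_triple m z"
proof -
  consider "m = 1" "z = 0" | "m = 1" "z \<noteq> 0" | "m = 2" | "m = 3"
    using assms by blast
  then show ?thesis
  proof cases
    case 1
    then show ?thesis using multi_conjugate_degenerate_triple_1_zero
      by (simp add: degenerate_triple_def origin_indicator_def)
  next
    case 2
    then show ?thesis using multi_conjugate_degenerate_triple_1_nonzero[OF 2(2)]
      by (simp add: degenerate_triple_def origin_indicator_def)
  next
    case 3
    then show ?thesis using multi_conjugate_degenerate_triple_2_3[OF refl, of z]
      by (simp add: degenerate_triple_def)
  next
    case 4
    then show ?thesis using multi_conjugate_degenerate_triple_2_3[OF insert_commute, of z]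
      by (simp add: degenerate_triple_def)
  qed
qed

lemma nn_integral_exp_neg_origin_indicator:
  "(\<integral>\<^sup>+ x. exp_neg_ereal (origin_indicator (x::'a::euclidean_space)) \<partial>lebesgue) = 0"
proof -
  have "exp_neg_ereal 0 = 1"
    unfolding zero_ereal_def by simp
  moreover have "exp_neg_ereal \<infinity> = 0"
    unfolding infinity_ereal_def by (rule exp_neg_ereal.simps(2))
  ultimately have "(\<lambda>x::'a. exp_neg_ereal (origin_indicator x)) = indicator {0}"
    by (simp add: fun_eq_iff origin_indicator_def indicator_def)
  moreover have "{0::'a} \<in> null_sets lebesgue"
    by (intro null_sets_completionI countable_imp_null_set_lborel) simp
  ultimately show ?thesis by (simp add: null_setsD1 null_setsD2)
qed

theorem mainTheorem2:
  shows "\<exists>V :: nat \<Rightarrow> real ^ 'n \<Rightarrow> ereal.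
     (\<forall>i\<in>{1,2,3}. \<forall>x. V i x \<noteq> -\<infinity> \<and> V i (- x) = V i x) \<and>
     (\<forall>m\<in>{1,2,3}. \<forall>z :: real ^ 'n.
        V m z = (SUP y \<in> {y :: nat \<Rightarrow> real ^ 'n. y m = z}.
                   ereal (\<Sum>i\<in>{1,2,3::nat}. \<Sum>j\<in>{1,2,3::nat}. if i < j then inner (y i) (y j) else 0)
                   - (\<Sum>i\<in>{1,2,3} - {m}. V i (y i)))) \<and>
     (\<Prod>i\<in>{1,2,3::nat}. \<integral>\<^sup>+ x. exp_neg_ereal (V i x) \<partial>lebesgue) = 0"
proof (intro exI[of _ degenerate_triple] conjI ballI allI)
  fix i :: nat and x :: "real ^ 'n"
  show "degenerate_triple i x \<noteq> -\<infinity>" "degenerate_triple i (- x) = degenerate_triple i x"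
    by (simp_all add: degenerate_triple_def origin_indicator_def)
next
  fix m :: nat and z :: "real ^ 'n"
  assume "m \<in> {1,2,3}"
  then have "degenerate_triple m z = multi_conjugate degenerate_triple m z"
    by (rule multi_conjugate_degenerate_triple[symmetric])
  then show "degenerate_triple m z = (SUP y \<in> {y. y m = z}.
      ereal (\<Sum>i\<in>{1,2,3::nat}. \<Sum>j\<in>{1,2,3::nat}. if i < j then inner (y i) (y j) else 0)
      - (\<Sum>i\<in>{1,2,3} - {m}. degenerate_triple i (y i)))"
    by (simp add: multi_conjugate_def pairwise_inner_def)
next
  have "(\<integral>\<^sup>+ x. exp_neg_ereal (degenerate_triple 1 (x :: real ^ 'n)) \<partial>lebesgue) = 0"
    by (simp only: degenerate_triple_def simp_thms if_True nn_integral_exp_neg_origin_indicator)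
  then show "(\<Prod>i\<in>{1,2,3::nat}. \<integral>\<^sup>+ x. exp_neg_ereal (degenerate_triple i (x :: real ^ 'n)) \<partial>lebesgue) = 0"
    by (intro prod_zero) (simp, blast)
qed

end
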